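(* Let $\Omega\subset\mathbb{R}^N$ be a bounded domain, $\lambda>0$, $\delta\in(0,1)$, $T>0$, $u_0\in L^2(\Omega)$. Define $g_\delta:\mathbb{R}\to\mathbb{R}$ by $g_\delta(s)=\frac{1}{1-s}$ for $s\le1-\delta$ and $g_\delta(s)=\delta^{-1}$ for $s>1-\delta$, and for $v\in L^2(\Omega)$ define \[ f_\delta(v)=\lambda\,\bigl(g_\delta(v)\bigr)^2\Bigl(1+\int_\Omega g_\delta(v)\,dx\Bigr)^{-2}. \] Let $M=\|u_0\|_{L^2}+1$ and \[ Y_M=\bigl\{u\in C([0,T];L^2(\Omega)):\ \|u\|_{L^\infty([0,T];L^2(\Omega))}\le M\bigr\}. \] Then $f_\delta$ is Lipschitz continuous on $Y_M$: there is a constant $L$ such that $\|f_\delta(u_1(t))-f_\delta(u_2(t))\|_{L^2(\Omega)}\le L\|u_1(t)-u_2(t)\|_{L^2(\Omega)}$ for all $u_1,u_2\in Y_M$ and $t\in[0,T]$. *)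

theory Defs
  imports "HOL-Analysis.Analysis"
begin

definition L2 :: "'a::euclidean_space set \<Rightarrow> ('a \<Rightarrow> real) \<Rightarrow> bool" where
  "L2 \<Omega> v \<longleftrightarrow> v \<in> borel_measurable (lebesgue_on \<Omega>) \<and>
                 integrable (lebesgue_on \<Omega>) (\<lambda>x. (v x)^2)"

definition L2_norm :: "'a::euclidean_space set \<Rightarrow> ('a \<Rightarrow> real) \<Rightarrow> real" where
  "L2_norm \<Omega> v = sqrt (LINT x | lebesgue_on \<Omega>. (v x)^2)"

definition g_delta :: "real \<Rightarrow> real \<Rightarrow> real" where
  "g_delta \<delta> s = (if s \<le> 1 - \<delta> then 1 / (1 - s) else 1 / \<delta>)"

definition f_delta :: "real \<Rightarrow> real \<Rightarrow> 'a::euclidean_space set \<Rightarrow> ('a \<Rightarrow> real) \<Rightarrow> ('a \<Rightarrow> real)" where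
  "f_delta lam \<delta> \<Omega> v = (\<lambda>x. lam * (g_delta \<delta> (v x))^2 /
       (1 + (LINT y | lebesgue_on \<Omega>. g_delta \<delta> (v y)))^2)"

definition Y_M :: "'a::euclidean_space set \<Rightarrow> real \<Rightarrow> real \<Rightarrow> (real \<Rightarrow> 'a \<Rightarrow> real) set" where
  "Y_M \<Omega> T M = {u. (\<forall>t\<in>{0..T}. L2 \<Omega> (u t)) \<and>
      (\<forall>t\<in>{0..T}. ((\<lambda>s. L2_norm \<Omega> (\<lambda>x. u s x - u t x)) \<longlongrightarrow> 0) (at t within {0..T})) \<and>
      (\<forall>t\<in>{0..T}. L2_norm \<Omega> (u t) \<le> M)}"

end

theory Submission
  imports Defs
begin

(* Since g_delta s = 1 / max (1 - s) delta, g_delta takes values in (0, 1/delta] and is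
   1/delta^2-Lipschitz.  Hence the nonlocal denominator 1 + int g_delta(v) lies in
   [1, 1 + |Omega|/delta] and moves by at most ||v1 - v2||_1 / delta^2, which gives the pointwise bound
     |f_delta(v1) - f_delta(v2)| <= P |v1 - v2| + Q ||v1 - v2||_1.
   Squaring, integrating and using ||w||_1^2 <= |Omega| ||w||_2^2 (Cauchy-Schwarz) yields the
   L^2-Lipschitz estimate on every Omega of finite measure. *)

lemma g_delta_eq_inverse_max: "0 < \<delta> \<Longrightarrow> g_delta \<delta> s = 1 / max (1 - s) \<delta>"
  by (simp add: g_delta_def max_def)

lemma g_delta_pos: "0 < \<delta> \<Longrightarrow> 0 < g_delta \<delta> s"
  by (simp add: g_delta_eq_inverse_max)

lemma g_delta_le: "0 < \<delta> \<Longrightarrow> g_delta \<delta> s \<le> 1 / \<delta>"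
  by (simp add: g_delta_eq_inverse_max frac_le)

lemma abs_inverse_diff_le:
  fixes a b c :: real
  assumes "0 < c" "c \<le> a" "c \<le> b"
  shows "\<bar>1 / a - 1 / b\<bar> \<le> \<bar>a - b\<bar> / c\<^sup>2"
proof -
  have "\<bar>1 / a - 1 / b\<bar> = \<bar>a - b\<bar> / (a * b)"
    using assms by (simp add: field_simps abs_minus_commute)
  also have "\<dots> \<le> \<bar>a - b\<bar> / c\<^sup>2"
    using assms by (intro divide_left_mono) (auto simp: power2_eq_square intro: mult_mono)
  finally show ?thesis .
qed

lemma g_delta_lipschitz:
  assumes "0 < \<delta>"
  shows "\<bar>g_delta \<delta> s - g_delta \<delta> t\<bar> \<le> \<bar>s - t\<bar> / \<delta>\<^sup>2"
proof -
  have "\<bar>g_delta \<delta> s - g_delta \<delta> t\<bar> \<le> \<bar>max (1 - s) \<delta> - max (1 - t) \<delta>\<bar> / \<delta>\<^sup>2"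
    unfolding g_delta_eq_inverse_max[OF assms] using assms by (intro abs_inverse_diff_le) auto
  also have "\<dots> \<le> \<bar>s - t\<bar> / \<delta>\<^sup>2"
    by (intro divide_right_mono) (auto simp: max_def)
  finally show ?thesis .
qed

lemma borel_measurable_g_delta [measurable]:
  assumes [measurable]: "v \<in> borel_measurable M"
  shows "(\<lambda>x. g_delta \<delta> (v x)) \<in> borel_measurable M"
  unfolding g_delta_def by measurable

lemma (in finite_measure) integral_abs_square_le:
  fixes w :: "'a \<Rightarrow> real"
  assumes [measurable]: "w \<in> borel_measurable M" and "integrable M (\<lambda>x. (w x)\<^sup>2)"
  shows "(\<integral>x. \<bar>w x\<bar> \<partial>M)\<^sup>2 \<le> measure M (space M) * (\<integral>x. (w x)\<^sup>2 \<partial>M)"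
proof -
  have "integrable M w"
    using assms by (rule square_integrable_imp_integrable)
  then have "ennreal ((\<integral>x. \<bar>w x\<bar> \<partial>M)\<^sup>2) = (\<integral>\<^sup>+x. ennreal \<bar>w x\<bar> * 1 \<partial>M)\<^sup>2"
    by (simp add: nn_integral_eq_integral ennreal_power)
  also have "\<dots> \<le> (\<integral>\<^sup>+x. (ennreal \<bar>w x\<bar>)\<^sup>2 \<partial>M) * (\<integral>\<^sup>+x. 1\<^sup>2 \<partial>M)"
    by (rule Cauchy_Schwarz_nn_integral) auto
  also have "\<dots> = ennreal (measure M (space M) * (\<integral>x. (w x)\<^sup>2 \<partial>M))"
    using assms(2)
    by (simp add: ennreal_power nn_integral_eq_integral emeasure_eq_measure ennreal_mult' mult.commute)
  finally show ?thesis
    by (simp add: ennreal_le_iff)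
qed

lemma abs_diff_square_div_square_le:
  fixes a1 a2 I1 I2 B C :: real
  assumes "0 \<le> a1" "a1 \<le> B" "0 \<le> a2" "a2 \<le> B" "0 \<le> I1" "I1 \<le> C" "0 \<le> I2" "I2 \<le> C"
  shows "\<bar>a1\<^sup>2 / (1 + I1)\<^sup>2 - a2\<^sup>2 / (1 + I2)\<^sup>2\<bar> \<le> 2 * B * \<bar>a1 - a2\<bar> + 2 * B\<^sup>2 * (1 + C) * \<bar>I1 - I2\<bar>"
proof -
  define D1 D2 where "D1 = (1 + I1)\<^sup>2" and "D2 = (1 + I2)\<^sup>2"
  have D: "1 \<le> D1" "1 \<le> D2"
    using assms by (simp_all add: D1_def D2_def)
  then have "1 \<le> D1 * D2"
    using mult_mono[OF D] by simp
  have div_le: "x / D \<le> y" if "x \<le> y" "0 \<le> y" "1 \<le> D" for x y D :: real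
  proof -
    have "x / D \<le> y / D"
      using that by (intro divide_right_mono) auto
    also have "\<dots> \<le> y / 1"
      using that by (intro divide_left_mono) auto
    finally show ?thesis
      by simp
  qed
  have "a1\<^sup>2 - a2\<^sup>2 = (a1 + a2) * (a1 - a2)"
    by (simp add: power2_eq_square algebra_simps)
  then have "\<bar>a1\<^sup>2 - a2\<^sup>2\<bar> = (a1 + a2) * \<bar>a1 - a2\<bar>"
    using assms by (simp add: abs_mult)
  also have "\<dots> \<le> 2 * B * \<bar>a1 - a2\<bar>"
    using assms by (intro mult_right_mono) auto
  finally have first: "\<bar>a1\<^sup>2 - a2\<^sup>2\<bar> / D1 \<le> 2 * B * \<bar>a1 - a2\<bar>"
    using assms D by (intro div_le) auto
  have "D1 - D2 = (2 + I1 + I2) * (I1 - I2)"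
    by (simp add: D1_def D2_def power2_eq_square algebra_simps)
  then have "\<bar>D1 - D2\<bar> = (2 + I1 + I2) * \<bar>I1 - I2\<bar>"
    using assms by (simp add: abs_mult)
  also have "\<dots> \<le> 2 * (1 + C) * \<bar>I1 - I2\<bar>"
    using assms by (intro mult_right_mono) auto
  finally have "a2\<^sup>2 * \<bar>D1 - D2\<bar> \<le> B\<^sup>2 * (2 * (1 + C) * \<bar>I1 - I2\<bar>)"
    using assms by (intro mult_mono power_mono) auto
  also have "\<dots> = 2 * B\<^sup>2 * (1 + C) * \<bar>I1 - I2\<bar>"
    by (simp only: mult_ac)
  finally have second: "a2\<^sup>2 * \<bar>D1 - D2\<bar> / (D1 * D2) \<le> 2 * B\<^sup>2 * (1 + C) * \<bar>I1 - I2\<bar>"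
    using assms \<open>1 \<le> D1 * D2\<close> by (intro div_le) auto
  have "a1\<^sup>2 / D1 - a2\<^sup>2 / D2 = (a1\<^sup>2 - a2\<^sup>2) / D1 - a2\<^sup>2 * (D1 - D2) / (D1 * D2)"
    using D by (simp add: field_simps)
  then have "\<bar>a1\<^sup>2 / D1 - a2\<^sup>2 / D2\<bar> \<le> \<bar>a1\<^sup>2 - a2\<^sup>2\<bar> / D1 + a2\<^sup>2 * \<bar>D1 - D2\<bar> / (D1 * D2)"
    using D abs_triangle_ineq4[of "(a1\<^sup>2 - a2\<^sup>2) / D1" "a2\<^sup>2 * (D1 - D2) / (D1 * D2)"]
    by (simp add: abs_mult)
  then show ?thesis
    using first second by (simp add: D1_def D2_def)
qed

lemma integrable_square_diff:
  fixes u v :: "'a \<Rightarrow> real"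
  assumes [measurable]: "u \<in> borel_measurable M" "v \<in> borel_measurable M"
    and "integrable M (\<lambda>x. (u x)\<^sup>2)" "integrable M (\<lambda>x. (v x)\<^sup>2)"
  shows "integrable M (\<lambda>x. (u x - v x)\<^sup>2)"
proof (rule Bochner_Integration.integrable_bound)
  show "integrable M (\<lambda>x. 2 * (u x)\<^sup>2 + 2 * (v x)\<^sup>2)"
    using assms by auto
  have "(a - b)\<^sup>2 \<le> 2 * a\<^sup>2 + 2 * b\<^sup>2" for a b :: real
    using zero_le_power2[of "a + b"] unfolding power2_sum power2_diff by linarith
  then show "AE x in M. norm ((u x - v x)\<^sup>2) \<le> norm (2 * (u x)\<^sup>2 + 2 * (v x)\<^sup>2)"
    by simp
qed measurable

lemma (in finite_measure) integral_square_le_of_pointwise_bound: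
  fixes F w :: "'a \<Rightarrow> real"
  assumes [measurable]: "F \<in> borel_measurable M" "w \<in> borel_measurable M"
    and w2: "integrable M (\<lambda>x. (w x)\<^sup>2)"
    and F: "\<And>x. x \<in> space M \<Longrightarrow> \<bar>F x\<bar> \<le> P * \<bar>w x\<bar> + Q * (\<integral>y. \<bar>w y\<bar> \<partial>M)"
  shows "(\<integral>x. (F x)\<^sup>2 \<partial>M) \<le> 2 * (P\<^sup>2 + Q\<^sup>2 * (measure M (space M))\<^sup>2) * (\<integral>x. (w x)\<^sup>2 \<partial>M)"
proof -
  define A where "A = (\<integral>y. \<bar>w y\<bar> \<partial>M)"
  define R where "R x = 2 * P\<^sup>2 * (w x)\<^sup>2 + 2 * Q\<^sup>2 * A\<^sup>2" for x
  have R: "integrable M R"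
    unfolding R_def using w2 by auto
  have sum_square: "(p + q)\<^sup>2 \<le> 2 * p\<^sup>2 + 2 * q\<^sup>2" for p q :: real
    using zero_le_power2[of "p - q"] unfolding power2_sum power2_diff by linarith
  have FR: "(F x)\<^sup>2 \<le> R x" if "x \<in> space M" for x
  proof -
    have "\<bar>F x\<bar>\<^sup>2 \<le> (P * \<bar>w x\<bar> + Q * A)\<^sup>2"
      using F[OF that] unfolding A_def by (intro power_mono) auto
    also have "\<dots> \<le> R x"
      using sum_square[of "P * \<bar>w x\<bar>" "Q * A"] unfolding R_def by (simp add: power_mult_distrib)
    finally show ?thesis
      by simp
  qed
  have "integrable M (\<lambda>x. (F x)\<^sup>2)"
    by (intro Bochner_Integration.integrable_bound[OF R])
      (auto intro!: AE_I2 order_trans[OF FR abs_ge_self])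
  then have "(\<integral>x. (F x)\<^sup>2 \<partial>M) \<le> (\<integral>x. R x \<partial>M)"
    using R FR by (intro integral_mono) auto
  also have "\<dots> = 2 * P\<^sup>2 * (\<integral>x. (w x)\<^sup>2 \<partial>M) + 2 * Q\<^sup>2 * A\<^sup>2 * measure M (space M)"
    using w2 by (simp add: R_def)
  also have "\<dots> \<le> 2 * P\<^sup>2 * (\<integral>x. (w x)\<^sup>2 \<partial>M)
      + 2 * Q\<^sup>2 * (measure M (space M) * (\<integral>x. (w x)\<^sup>2 \<partial>M)) * measure M (space M)"
    unfolding A_def using integral_abs_square_le[OF assms(2) w2]
    by (intro add_left_mono mult_right_mono mult_left_mono) auto
  finally show ?thesis
    by (simp add: algebra_simps power2_eq_square)
qed

lemma (in finite_measure) integrable_g_delta: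
  assumes "0 < \<delta>" and [measurable]: "v \<in> borel_measurable M"
  shows "integrable M (\<lambda>y. g_delta \<delta> (v y))"
  using g_delta_pos[OF \<open>0 < \<delta>\<close>] g_delta_le[OF \<open>0 < \<delta>\<close>]
  by (intro integrable_const_bound[where B="1 / \<delta>"]) (auto simp: less_imp_le)

lemma (in finite_measure) integral_g_delta_bounds:
  assumes "0 < \<delta>" and [measurable]: "v \<in> borel_measurable M"
  shows "0 \<le> (\<integral>y. g_delta \<delta> (v y) \<partial>M)" "(\<integral>y. g_delta \<delta> (v y) \<partial>M) \<le> measure M (space M) / \<delta>"
proof -
  show "0 \<le> (\<integral>y. g_delta \<delta> (v y) \<partial>M)"
    using g_delta_pos[OF \<open>0 < \<delta>\<close>] by (simp add: less_imp_le)
  have "(\<integral>y. g_delta \<delta> (v y) \<partial>M) \<le> (\<integral>y. 1 / \<delta> \<partial>M)"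
    using integrable_g_delta[OF assms] g_delta_le[OF \<open>0 < \<delta>\<close>] by (intro integral_mono) auto
  then show "(\<integral>y. g_delta \<delta> (v y) \<partial>M) \<le> measure M (space M) / \<delta>"
    by simp
qed

lemma (in finite_measure) abs_integral_g_delta_diff_le:
  assumes "0 < \<delta>" and [measurable]: "v1 \<in> borel_measurable M" "v2 \<in> borel_measurable M"
    and "integrable M (\<lambda>x. v1 x - v2 x)"
  shows "\<bar>(\<integral>y. g_delta \<delta> (v1 y) \<partial>M) - (\<integral>y. g_delta \<delta> (v2 y) \<partial>M)\<bar>
           \<le> (\<integral>y. \<bar>v1 y - v2 y\<bar> \<partial>M) / \<delta>\<^sup>2"
proof -
  have "\<bar>(\<integral>y. g_delta \<delta> (v1 y) \<partial>M) - (\<integral>y. g_delta \<delta> (v2 y) \<partial>M)\<bar>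
      = \<bar>\<integral>y. g_delta \<delta> (v1 y) - g_delta \<delta> (v2 y) \<partial>M\<bar>"
    using integrable_g_delta[OF \<open>0 < \<delta>\<close>] by simp
  also have "\<dots> \<le> (\<integral>y. \<bar>g_delta \<delta> (v1 y) - g_delta \<delta> (v2 y)\<bar> \<partial>M)"
    by (rule integral_abs_bound)
  also have "\<dots> \<le> (\<integral>y. \<bar>v1 y - v2 y\<bar> / \<delta>\<^sup>2 \<partial>M)"
    using integrable_g_delta[OF \<open>0 < \<delta>\<close>] assms(4) g_delta_lipschitz[OF \<open>0 < \<delta>\<close>]
    by (intro integral_mono) auto
  finally show ?thesis
    by simp
qed

lemma f_delta_diff_le:
  fixes \<Omega> :: "'a::euclidean_space set" and lam \<delta> :: real
  defines "\<mu> \<equiv> measure (lebesgue_on \<Omega>) \<Omega>"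
  assumes "\<Omega> \<in> lmeasurable" "0 < \<delta>"
    and [measurable]: "v1 \<in> borel_measurable (lebesgue_on \<Omega>)" "v2 \<in> borel_measurable (lebesgue_on \<Omega>)"
    and "integrable (lebesgue_on \<Omega>) (\<lambda>x. v1 x - v2 x)"
  shows "\<bar>f_delta lam \<delta> \<Omega> v1 x - f_delta lam \<delta> \<Omega> v2 x\<bar>
           \<le> 2 * \<bar>lam\<bar> / \<delta> ^ 3 * \<bar>v1 x - v2 x\<bar>
             + 2 * \<bar>lam\<bar> * (1 + \<mu> / \<delta>) / \<delta> ^ 4 * (\<integral>y. \<bar>v1 y - v2 y\<bar> \<partial>lebesgue_on \<Omega>)"
proof -
  interpret finite_measure "lebesgue_on \<Omega>"
    using \<open>\<Omega> \<in> lmeasurable\<close> by (rule finite_measure_lebesgue_on)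
  define I where "I v = (\<integral>y. g_delta \<delta> (v y) \<partial>lebesgue_on \<Omega>)" for v
  have I_bounds: "0 \<le> I v" "I v \<le> \<mu> / \<delta>" if "v \<in> borel_measurable (lebesgue_on \<Omega>)" for v
    using integral_g_delta_bounds[OF \<open>0 < \<delta>\<close> that] by (simp_all add: I_def \<mu>_def)
  have "\<bar>f_delta lam \<delta> \<Omega> v1 x - f_delta lam \<delta> \<Omega> v2 x\<bar>
      = \<bar>lam\<bar> * \<bar>(g_delta \<delta> (v1 x))\<^sup>2 / (1 + I v1)\<^sup>2 - (g_delta \<delta> (v2 x))\<^sup>2 / (1 + I v2)\<^sup>2\<bar>"
    by (simp add: f_delta_def I_def right_diff_distrib flip: abs_mult)
  also have "\<dots> \<le> \<bar>lam\<bar> * (2 * (1 / \<delta>) * \<bar>g_delta \<delta> (v1 x) - g_delta \<delta> (v2 x)\<bar>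
      + 2 * (1 / \<delta>)\<^sup>2 * (1 + \<mu> / \<delta>) * \<bar>I v1 - I v2\<bar>)"
    using g_delta_pos[OF \<open>0 < \<delta>\<close>] g_delta_le[OF \<open>0 < \<delta>\<close>] I_bounds
    by (intro mult_left_mono abs_diff_square_div_square_le) (auto simp: less_imp_le)
  also have "\<dots> \<le> \<bar>lam\<bar> * (2 * (1 / \<delta>) * (\<bar>v1 x - v2 x\<bar> / \<delta>\<^sup>2)
      + 2 * (1 / \<delta>)\<^sup>2 * (1 + \<mu> / \<delta>) * ((\<integral>y. \<bar>v1 y - v2 y\<bar> \<partial>lebesgue_on \<Omega>) / \<delta>\<^sup>2))"
    using g_delta_lipschitz[OF \<open>0 < \<delta>\<close>] abs_integral_g_delta_diff_le[OF \<open>0 < \<delta>\<close> assms(4-6)]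
      \<open>0 < \<delta>\<close> \<mu>_def
    by (intro mult_left_mono add_mono) (auto simp: I_def)
  also have "\<dots> = 2 * \<bar>lam\<bar> / \<delta> ^ 3 * \<bar>v1 x - v2 x\<bar>
      + 2 * \<bar>lam\<bar> * (1 + \<mu> / \<delta>) / \<delta> ^ 4 * (\<integral>y. \<bar>v1 y - v2 y\<bar> \<partial>lebesgue_on \<Omega>)"
    by (simp add: field_simps power2_eq_square power3_eq_cube power4_eq_xxxx)
  finally show ?thesis .
qed

lemma f_delta_lipschitz_L2:
  fixes \<Omega> :: "'a::euclidean_space set" and lam \<delta> :: real
  assumes "\<Omega> \<in> lmeasurable" "0 < \<delta>"
  shows "\<exists>L. \<forall>v1 v2. L2 \<Omega> v1 \<longrightarrow> L2 \<Omega> v2 \<longrightarrow>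
           L2_norm \<Omega> (\<lambda>x. f_delta lam \<delta> \<Omega> v1 x - f_delta lam \<delta> \<Omega> v2 x)
             \<le> L * L2_norm \<Omega> (\<lambda>x. v1 x - v2 x)"
proof -
  let ?M = "lebesgue_on \<Omega>"
  interpret finite_measure ?M
    using \<open>\<Omega> \<in> lmeasurable\<close> by (rule finite_measure_lebesgue_on)
  define \<mu> where "\<mu> = measure ?M \<Omega>"
  define P where "P = 2 * \<bar>lam\<bar> / \<delta> ^ 3"
  define Q where "Q = 2 * \<bar>lam\<bar> * (1 + \<mu> / \<delta>) / \<delta> ^ 4"
  have "L2_norm \<Omega> (\<lambda>x. f_delta lam \<delta> \<Omega> v1 x - f_delta lam \<delta> \<Omega> v2 x)
          \<le> sqrt (2 * (P\<^sup>2 + Q\<^sup>2 * \<mu>\<^sup>2)) * L2_norm \<Omega> (\<lambda>x. v1 x - v2 x)"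
    if "L2 \<Omega> v1" "L2 \<Omega> v2" for v1 v2
  proof -
    have v_meas [measurable]: "v1 \<in> borel_measurable ?M" "v2 \<in> borel_measurable ?M"
      and "integrable ?M (\<lambda>x. (v1 x)\<^sup>2)" "integrable ?M (\<lambda>x. (v2 x)\<^sup>2)"
      using that by (simp_all add: L2_def)
    then have diff_square: "integrable ?M (\<lambda>x. (v1 x - v2 x)\<^sup>2)"
      by (rule integrable_square_diff)
    have diff_meas: "(\<lambda>x. v1 x - v2 x) \<in> borel_measurable ?M"
      by measurable
    have f_meas: "(\<lambda>x. f_delta lam \<delta> \<Omega> v1 x - f_delta lam \<delta> \<Omega> v2 x) \<in> borel_measurable ?M"
      unfolding f_delta_def by measurable
    have "integrable ?M (\<lambda>x. v1 x - v2 x)"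
      using diff_meas diff_square by (rule square_integrable_imp_integrable)
    then have f_bound: "\<bar>f_delta lam \<delta> \<Omega> v1 x - f_delta lam \<delta> \<Omega> v2 x\<bar>
        \<le> P * \<bar>v1 x - v2 x\<bar> + Q * (\<integral>y. \<bar>v1 y - v2 y\<bar> \<partial>?M)" for x
      unfolding P_def Q_def \<mu>_def by (rule f_delta_diff_le[OF assms v_meas])
    have "(\<integral>x. (f_delta lam \<delta> \<Omega> v1 x - f_delta lam \<delta> \<Omega> v2 x)\<^sup>2 \<partial>?M)
        \<le> 2 * (P\<^sup>2 + Q\<^sup>2 * \<mu>\<^sup>2) * (\<integral>x. (v1 x - v2 x)\<^sup>2 \<partial>?M)"
      using integral_square_le_of_pointwise_bound[OF f_meas diff_meas diff_square f_bound]
      by (simp add: \<mu>_def)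
    then show ?thesis
      unfolding L2_norm_def real_sqrt_mult[symmetric] by (rule real_sqrt_le_mono)
  qed
  then show ?thesis
    by blast
qed

theorem lemma3p1:
  fixes \<Omega> :: "'a::euclidean_space set" and lam \<delta> T :: real and u0 :: "'a \<Rightarrow> real"
  assumes "open \<Omega>" "connected \<Omega>" "bounded \<Omega>" "\<Omega> \<noteq> {}"
    and "lam > 0" "0 < \<delta>" "\<delta> < 1" "T > 0"
    and "L2 \<Omega> u0"
  shows "\<exists>L. \<forall>u1\<in>Y_M \<Omega> T (L2_norm \<Omega> u0 + 1). \<forall>u2\<in>Y_M \<Omega> T (L2_norm \<Omega> u0 + 1). \<forall>t\<in>{0..T}.
           L2_norm \<Omega> (\<lambda>x. f_delta lam \<delta> \<Omega> (u1 t) x - f_delta lam \<delta> \<Omega> (u2 t) x)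
             \<le> L * L2_norm \<Omega> (\<lambda>x. u1 t x - u2 t x)"
proof -
  have "\<Omega> \<in> lmeasurable"
    using \<open>bounded \<Omega>\<close> \<open>open \<Omega>\<close> by (rule lmeasurable_open)
  then obtain L where L: "\<forall>v1 v2. L2 \<Omega> v1 \<longrightarrow> L2 \<Omega> v2 \<longrightarrow>
      L2_norm \<Omega> (\<lambda>x. f_delta lam \<delta> \<Omega> v1 x - f_delta lam \<delta> \<Omega> v2 x) \<le> L * L2_norm \<Omega> (\<lambda>x. v1 x - v2 x)"
    using f_delta_lipschitz_L2 \<open>0 < \<delta>\<close> by blast
  have "L2 \<Omega> (u t)" if "u \<in> Y_M \<Omega> T M" "t \<in> {0..T}" for u t M
    using that by (simp add: Y_M_def)
  then show ?thesis
    using L by blast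
qed

end
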